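(* Let $(F,+,\cdot)$ be a (left) near-field such that the set $\{+_\sigma:\sigma\text{ a multiplicative automorphism of }F\}$ (equivalently, the set of near-fields $(F,+_\sigma,\cdot)$ induced by multiplicative automorphisms) is finite, and such that $F$ is finite dimensional as a right vector space over its division ring $F_{d}$ of right distributive elements. Let $\{V_k\}_{k\in I}$ be a family of multiplicative near-vector spaces over $F$. Then the direct product $\prod_{k\in I}V_k$, with componentwise addition and scalar multiplication, is a near-vector space over $F$.
   Context: A (left) near-field is $(F,+,\cdot,0,1)$ where $(F,\cdot,1)$ is a monoid, $(F\setminus\{0\},\cdot)$ is a group, $(F,+,0)$ is an abelian group, and $\alpha(\beta+\gamma)=\alpha\beta+\alpha\gamma$. $F_{d}$ is the set of $\gamma$ with $(\alpha+\beta)\gamma=\alpha\gamma+\beta\gamma$ for all $\alpha,\beta$; it is a division ring and $F$ is a right vector space over it. A multiplicative automorphism is a monoid automorphism of $(F,\cdot)$; for such $\tau$, $\alpha+_\tau\beta=\tau^{-1}(\tau(\alpha)+\tau(\beta))$. A near-vector space over $F$ is an abelian group $V$ with a left action of $(F,\cdot)$ by group endomorphisms, with $0,1,-1$ acting as $0,\mathrm{id},-\mathrm{id}$, the action free, and the quasi-kernel $Q(V)=\{u:\forall\alpha,\beta\ \exists\gamma,\ \alpha u+\beta u=\gamma u\}$ generating $V$ additively. For families $\boldsymbol\sigma=(\sigma_i)_{i\in J}$, $\boldsymbol\rho=(\rho_i)_{i\in J}$ of multiplicative automorphisms, $F^{\boldsymbol\sigma,\boldsymbol\rho}$ is the set of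 finitely supported $(\alpha_i)\in F^J$ with addition $(\alpha_i+_{\sigma_i}\beta_i)$ and scalar multiplication $\alpha\cdot(\alpha_i)=(\rho_i(\alpha)\alpha_i)$. A near-vector space $V$ over $F$ is multiplicative if there is a bijective additive map $\phi:V\to F^{\boldsymbol\sigma,\boldsymbol\rho}$ with $\phi(\alpha v)=\alpha\phi(v)$, for some such families. *)

theory Defs
  imports Main "HOL-Library.FuncSet"
begin

definition near_field :: "('a \<Rightarrow> 'a \<Rightarrow> 'a) \<Rightarrow> ('a \<Rightarrow> 'a \<Rightarrow> 'a) \<Rightarrow> 'a \<Rightarrow> 'a \<Rightarrow> bool" where
  "near_field add mult z u \<longleftrightarrow>
     \<comment> \<open>(F, mult, u) is a monoid\<close>
     (\<forall>a b c. mult (mult a b) c = mult a (mult b c)) \<and>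
     (\<forall>a. mult u a = a \<and> mult a u = a) \<and>
     \<comment> \<open>(F - {0}, mult) is a group\<close>
     u \<noteq> z \<and>
     (\<forall>a b. a \<noteq> z \<longrightarrow> b \<noteq> z \<longrightarrow> mult a b \<noteq> z) \<and>
     (\<forall>a. a \<noteq> z \<longrightarrow> (\<exists>b. b \<noteq> z \<and> mult a b = u \<and> mult b a = u)) \<and>
     \<comment> \<open>(F, add, z) is an abelian group\<close>
     (\<forall>a b c. add (add a b) c = add a (add b c)) \<and>
     (\<forall>a b. add a b = add b a) \<and>
     (\<forall>a. add z a = a) \<and>
     (\<forall>a. \<exists>b. add a b = z) \<and>
     \<comment> \<open>left distributivity\<close>
     (\<forall>a b c. mult a (add b c) = add (mult a b) (mult a c))"

definition nf_neg :: "('a \<Rightarrow> 'a \<Rightarrow> 'a) \<Rightarrow> 'a \<Rightarrow> 'a \<Rightarrow> 'a" where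
  "nf_neg add z a = (THE b. add a b = z)"

definition dist_elems :: "('a \<Rightarrow> 'a \<Rightarrow> 'a) \<Rightarrow> ('a \<Rightarrow> 'a \<Rightarrow> 'a) \<Rightarrow> 'a set" where
  "dist_elems add mult = {g. \<forall>a b. mult (add a b) g = add (mult a g) (mult b g)}"

inductive_set rspan :: "('a \<Rightarrow> 'a \<Rightarrow> 'a) \<Rightarrow> ('a \<Rightarrow> 'a \<Rightarrow> 'a) \<Rightarrow> 'a \<Rightarrow> 'a set \<Rightarrow> 'a set \<Rightarrow> 'a set"
  for add mult z B D where
  rspan_zero: "z \<in> rspan add mult z B D"
| rspan_step: "x \<in> rspan add mult z B D \<Longrightarrow> b \<in> B \<Longrightarrow> d \<in> D \<Longrightarrow>
                 add x (mult b d) \<in> rspan add mult z B D"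

definition fin_dim_over_Fd :: "('a \<Rightarrow> 'a \<Rightarrow> 'a) \<Rightarrow> ('a \<Rightarrow> 'a \<Rightarrow> 'a) \<Rightarrow> 'a \<Rightarrow> bool" where
  "fin_dim_over_Fd add mult z \<longleftrightarrow>
     (\<exists>B. finite B \<and> rspan add mult z B (dist_elems add mult) = UNIV)"

definition mult_aut :: "('a \<Rightarrow> 'a \<Rightarrow> 'a) \<Rightarrow> 'a \<Rightarrow> ('a \<Rightarrow> 'a) \<Rightarrow> bool" where
  "mult_aut mult u \<tau> \<longleftrightarrow> bij \<tau> \<and> (\<forall>a b. \<tau> (mult a b) = mult (\<tau> a) (\<tau> b)) \<and> \<tau> u = u"

definition tau_add :: "('a \<Rightarrow> 'a \<Rightarrow> 'a) \<Rightarrow> ('a \<Rightarrow> 'a) \<Rightarrow> 'a \<Rightarrow> 'a \<Rightarrow> 'a" where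
  "tau_add add \<tau> = (\<lambda>a b. inv \<tau> (add (\<tau> a) (\<tau> b)))"

definition ab_grp_on :: "'v set \<Rightarrow> ('v \<Rightarrow> 'v \<Rightarrow> 'v) \<Rightarrow> 'v \<Rightarrow> bool" where
  "ab_grp_on V vadd vz \<longleftrightarrow>
     vz \<in> V \<and> (\<forall>x\<in>V. \<forall>y\<in>V. vadd x y \<in> V) \<and>
     (\<forall>x\<in>V. \<forall>y\<in>V. \<forall>w\<in>V. vadd (vadd x y) w = vadd x (vadd y w)) \<and>
     (\<forall>x\<in>V. \<forall>y\<in>V. vadd x y = vadd y x) \<and>
     (\<forall>x\<in>V. vadd vz x = x) \<and>
     (\<forall>x\<in>V. \<exists>y\<in>V. vadd x y = vz)"

definition qker :: "'v set \<Rightarrow> ('v \<Rightarrow> 'v \<Rightarrow> 'v) \<Rightarrow> ('a \<Rightarrow> 'v \<Rightarrow> 'v) \<Rightarrow> 'v set" where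
  "qker V vadd smult = {v \<in> V. \<forall>a b. \<exists>c. vadd (smult a v) (smult b v) = smult c v}"

inductive_set agen :: "'v set \<Rightarrow> ('v \<Rightarrow> 'v \<Rightarrow> 'v) \<Rightarrow> 'v \<Rightarrow> 'v set \<Rightarrow> 'v set"
  for V vadd vz Q where
  agen_zero: "vz \<in> agen V vadd vz Q"
| agen_gen: "q \<in> Q \<Longrightarrow> q \<in> agen V vadd vz Q"
| agen_add: "x \<in> agen V vadd vz Q \<Longrightarrow> y \<in> agen V vadd vz Q \<Longrightarrow> vadd x y \<in> agen V vadd vz Q"
| agen_neg: "x \<in> agen V vadd vz Q \<Longrightarrow> y \<in> V \<Longrightarrow> vadd x y = vz \<Longrightarrow> y \<in> agen V vadd vz Q"

definition nvs :: "('a \<Rightarrow> 'a \<Rightarrow> 'a) \<Rightarrow> ('a \<Rightarrow> 'a \<Rightarrow> 'a) \<Rightarrow> 'a \<Rightarrow> 'a \<Rightarrow>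
                   'v set \<Rightarrow> ('v \<Rightarrow> 'v \<Rightarrow> 'v) \<Rightarrow> 'v \<Rightarrow> ('a \<Rightarrow> 'v \<Rightarrow> 'v) \<Rightarrow> bool" where
  "nvs add mult z u V vadd vz smult \<longleftrightarrow>
     ab_grp_on V vadd vz \<and>
     (\<forall>a. \<forall>v\<in>V. smult a v \<in> V) \<and>
     (\<forall>a. \<forall>v\<in>V. \<forall>w\<in>V. smult a (vadd v w) = vadd (smult a v) (smult a w)) \<and>
     (\<forall>a b. \<forall>v\<in>V. smult (mult a b) v = smult a (smult b v)) \<and>
     (\<forall>v\<in>V. smult z v = vz) \<and>
     (\<forall>v\<in>V. smult u v = v) \<and>
     (\<forall>v\<in>V. vadd v (smult (nf_neg add z u) v) = vz) \<and>
     (\<forall>a b. \<forall>v\<in>V. smult a v = smult b v \<longrightarrow> a = b \<or> v = vz) \<and>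
     V = agen V vadd vz (qker V vadd smult)"

definition fsupp :: "'a \<Rightarrow> 'j set \<Rightarrow> ('j \<Rightarrow> 'a) set" where
  "fsupp z J = {f. (\<forall>i. i \<notin> J \<longrightarrow> f i = z) \<and> finite {i. f i \<noteq> z}}"

text \<open>Multiplicative near-vector space: isomorphic to some F^(sigma,rho).
  The index set J is taken inside the carrier type 'v (no loss: J injects into V).\<close>
definition mult_nvs :: "('a \<Rightarrow> 'a \<Rightarrow> 'a) \<Rightarrow> ('a \<Rightarrow> 'a \<Rightarrow> 'a) \<Rightarrow> 'a \<Rightarrow> 'a \<Rightarrow>
                   'v set \<Rightarrow> ('v \<Rightarrow> 'v \<Rightarrow> 'v) \<Rightarrow> 'v \<Rightarrow> ('a \<Rightarrow> 'v \<Rightarrow> 'v) \<Rightarrow> bool" where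
  "mult_nvs add mult z u V vadd vz smult \<longleftrightarrow>
     nvs add mult z u V vadd vz smult \<and>
     (\<exists>(J :: 'v set) (\<sigma> :: 'v \<Rightarrow> 'a \<Rightarrow> 'a) (\<rho> :: 'v \<Rightarrow> 'a \<Rightarrow> 'a) (\<phi> :: 'v \<Rightarrow> 'v \<Rightarrow> 'a).
        (\<forall>i\<in>J. mult_aut mult u (\<sigma> i) \<and> mult_aut mult u (\<rho> i)) \<and>
        bij_betw \<phi> V (fsupp z J) \<and>
        (\<forall>v\<in>V. \<forall>w\<in>V. \<phi> (vadd v w) =
             (\<lambda>i. if i \<in> J then tau_add add (\<sigma> i) (\<phi> v i) (\<phi> w i) else z)) \<and>
        (\<forall>a. \<forall>v\<in>V. \<phi> (smult a v) =
             (\<lambda>i. if i \<in> J then mult (\<rho> i a) (\<phi> v i) else z)))"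

end

theory Submission
  imports Defs
begin

(* Write V_k in coordinates as F^(sigma,rho).  For a coordinate twisted by sigma and rho with
   nonzero value alpha, left distributivity gives
     rho(a) alpha +_sigma rho(b) alpha = rho(a +_kappa b) alpha,
   where kappa x = sigma(alpha)^-1 sigma(rho x) sigma(alpha) is again a multiplicative
   automorphism.  So a vector all of whose nonzero coordinates share the same addition +_kappa
   lies in the quasi-kernel, with a v + b v = (a +_kappa b) v, and every vector is the sum of its
   parts indexed by the finitely many additions +_kappa.  As the witness a +_kappa b does not
   depend on the component, the parts of the components of an element of the product with the
   same +_kappa form an element of the quasi-kernel of the product; hence the product is
   generated by its quasi-kernel, and the other axioms hold componentwise. *)

definition qker_rule :: "'v set \<Rightarrow> ('v \<Rightarrow> 'v \<Rightarrow> 'v) \<Rightarrow> ('a \<Rightarrow> 'v \<Rightarrow> 'v) \<Rightarrow> ('a \<Rightarrow> 'a \<Rightarrow> 'a) \<Rightarrow> 'v set" where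
  "qker_rule V vadd smult p = {v \<in> V. \<forall>a b. vadd (smult a v) (smult b v) = smult (p a b) v}"

lemma qker_rule_subset_qker: "qker_rule V vadd smult p \<subseteq> qker V vadd smult"
  unfolding qker_rule_def qker_def by blast

lemma ab_grp_onD:
  assumes "ab_grp_on V vadd vz"
  shows "vz \<in> V"
    and "x \<in> V \<Longrightarrow> y \<in> V \<Longrightarrow> vadd x y \<in> V"
    and "x \<in> V \<Longrightarrow> y \<in> V \<Longrightarrow> w \<in> V \<Longrightarrow> vadd (vadd x y) w = vadd x (vadd y w)"
    and "x \<in> V \<Longrightarrow> y \<in> V \<Longrightarrow> vadd x y = vadd y x"
    and "x \<in> V \<Longrightarrow> vadd vz x = x"
    and "x \<in> V \<Longrightarrow> \<exists>y\<in>V. vadd x y = vz"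
  using assms unfolding ab_grp_on_def by blast+

lemma nvsD:
  assumes "nvs add mult z u V vadd vz smult"
  shows "ab_grp_on V vadd vz"
    and "v \<in> V \<Longrightarrow> smult a v \<in> V"
    and "v \<in> V \<Longrightarrow> w \<in> V \<Longrightarrow> smult a (vadd v w) = vadd (smult a v) (smult a w)"
    and "v \<in> V \<Longrightarrow> smult (mult a b) v = smult a (smult b v)"
    and "v \<in> V \<Longrightarrow> smult z v = vz"
    and "v \<in> V \<Longrightarrow> smult u v = v"
    and "v \<in> V \<Longrightarrow> vadd v (smult (nf_neg add z u) v) = vz"
    and "v \<in> V \<Longrightarrow> smult a v = smult b v \<Longrightarrow> a = b \<or> v = vz"
  using assms unfolding nvs_def by (elim conjE; blast)+

lemma agen_subset:
  assumes "vz \<in> V" "\<And>x y. x \<in> V \<Longrightarrow> y \<in> V \<Longrightarrow> vadd x y \<in> V" "Q \<subseteq> V"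
  shows "agen V vadd vz Q \<subseteq> V"
proof
  fix x assume "x \<in> agen V vadd vz Q"
  then show "x \<in> V" by induction (use assms in auto)
qed

lemma foldr_in_agen:
  "(\<And>p. p \<in> set ps \<Longrightarrow> w p \<in> agen V vadd vz Q) \<Longrightarrow> foldr (\<lambda>p. vadd (w p)) ps vz \<in> agen V vadd vz Q"
  by (induction ps) (auto intro: agen.intros)

lemma mult_aut_comp:
  assumes "mult_aut mult u \<sigma>" "mult_aut mult u \<tau>"
  shows "mult_aut mult u (\<sigma> \<circ> \<tau>)"
  using assms unfolding mult_aut_def by (auto intro: bij_comp)

lemma mult_aut_inv_apply:
  assumes "mult_aut mult u \<tau>"
  shows "\<tau> (inv \<tau> y) = y" "inv \<tau> (\<tau> x) = x"
  using assms unfolding mult_aut_def by (auto simp: bij_is_surj bij_is_inj surj_f_inv_f)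

lemma mult_aut_tau_add:
  assumes "mult_aut mult u \<tau>"
  shows "\<tau> (tau_add add \<tau> x y) = add (\<tau> x) (\<tau> y)"
  unfolding tau_add_def using mult_aut_inv_apply[OF assms] by simp

locale nearfield =
  fixes add mult :: "'a \<Rightarrow> 'a \<Rightarrow> 'a" and z u :: 'a
  assumes near_field: "near_field add mult z u"
begin

lemma mult_assoc: "mult (mult a b) c = mult a (mult b c)"
  and mult_one_left: "mult u a = a"
  and mult_one_right: "mult a u = a"
  and one_neq_zero: "u \<noteq> z"
  and mult_nonzero: "a \<noteq> z \<Longrightarrow> b \<noteq> z \<Longrightarrow> mult a b \<noteq> z"
  and mult_inverse_ex: "a \<noteq> z \<Longrightarrow> \<exists>b. mult a b = u \<and> mult b a = u"
  and add_assoc: "add (add a b) c = add a (add b c)"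
  and add_comm: "add a b = add b a"
  and add_zero_left: "add z a = a"
  and add_neg_ex: "\<exists>b. add a b = z"
  and left_distrib: "mult a (add b c) = add (mult a b) (mult a c)"
  using near_field unfolding near_field_def by metis+

lemma add_zero_right: "add a z = a"
  using add_zero_left add_comm by metis

lemma add_left_cancel: "add a b = add a c \<Longrightarrow> b = c"
  by (metis add_assoc add_comm add_neg_ex add_zero_left)

lemma mult_zero_right: "mult a z = z"
proof -
  have "add (mult a z) (mult a z) = add (mult a z) z"
    using left_distrib[of a z z] by (simp add: add_zero_left add_zero_right)
  then show ?thesis by (rule add_left_cancel)
qed

lemma mult_zero_left: "mult z a = z"
proof (cases "a = z")
  case True
  then show ?thesis by (simp add: mult_zero_right)
next
  case False
  then obtain b where ab: "mult a b = u" using mult_inverse_ex by blast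
  then have "b \<noteq> z" using one_neq_zero mult_zero_right by metis
  have "mult (mult z a) b = z"
    using ab by (simp add: mult_assoc mult_one_right mult_zero_right)
  then show ?thesis using \<open>b \<noteq> z\<close> mult_nonzero by blast
qed

lemma mult_aut_zero:
  assumes "mult_aut mult u \<tau>"
  shows "\<tau> z = z"
proof -
  obtain x where x: "\<tau> x = z"
    using assms unfolding mult_aut_def by (metis bij_pointE)
  have "\<tau> z = \<tau> (mult z x)" by (simp add: mult_zero_left)
  also have "\<dots> = z"
    using assms x unfolding mult_aut_def by (simp add: mult_zero_right)
  finally show ?thesis .
qed

lemma tau_add_zero_left: "mult_aut mult u \<tau> \<Longrightarrow> tau_add add \<tau> z x = x"
  unfolding tau_add_def by (simp add: mult_aut_zero mult_aut_inv_apply add_zero_left)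

lemma tau_add_zero_right: "mult_aut mult u \<tau> \<Longrightarrow> tau_add add \<tau> x z = x"
  unfolding tau_add_def by (simp add: mult_aut_zero mult_aut_inv_apply add_zero_right)

definition inverse_of :: "'a \<Rightarrow> 'a" where
  "inverse_of a = (SOME b. mult a b = u \<and> mult b a = u)"

lemma mult_inverse_of:
  assumes "a \<noteq> z"
  shows "mult a (inverse_of a) = u" "mult (inverse_of a) a = u"
  using someI_ex[OF mult_inverse_ex[OF assms]] unfolding inverse_of_def by auto

definition inner_aut :: "'a \<Rightarrow> 'a \<Rightarrow> 'a" where
  "inner_aut b x = mult (mult (inverse_of b) x) b"

lemma mult_aut_inner_aut:
  assumes "b \<noteq> z"
  shows "mult_aut mult u (inner_aut b)"
proof -
  note inv = mult_inverse_of[OF assms]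
  have cancel: "mult b (mult (inverse_of b) x) = x" "mult (inverse_of b) (mult b x) = x" for x
    using inv by (simp_all flip: mult_assoc add: mult_one_left)
  have "inner_aut b \<circ> (\<lambda>x. mult (mult b x) (inverse_of b)) = id"
       "(\<lambda>x. mult (mult b x) (inverse_of b)) \<circ> inner_aut b = id"
    unfolding inner_aut_def by (simp_all add: fun_eq_iff mult_assoc inv cancel mult_one_right)
  then have "bij (inner_aut b)" using o_bij by blast
  moreover have "inner_aut b (mult x y) = mult (inner_aut b x) (inner_aut b y)" for x y
    unfolding inner_aut_def by (simp add: mult_assoc cancel)
  moreover have "inner_aut b u = u"
    unfolding inner_aut_def by (simp add: mult_one_right inv)
  ultimately show ?thesis unfolding mult_aut_def by blast
qed

definition coord_sum_rule :: "('a \<Rightarrow> 'a) \<Rightarrow> ('a \<Rightarrow> 'a) \<Rightarrow> 'a \<Rightarrow> 'a \<Rightarrow> 'a \<Rightarrow> 'a" where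
  "coord_sum_rule \<sigma> \<rho> \<alpha> = tau_add add (inner_aut (\<sigma> \<alpha>) \<circ> \<sigma> \<circ> \<rho>)"

lemma coord_sum_rule_mult_aut:
  assumes "mult_aut mult u \<sigma>" "mult_aut mult u \<rho>" "\<alpha> \<noteq> z"
  shows "coord_sum_rule \<sigma> \<rho> \<alpha> \<in> {tau_add add \<tau> | \<tau>. mult_aut mult u \<tau>}"
proof -
  have "\<sigma> \<alpha> \<noteq> z" using assms by (metis mult_aut_zero mult_aut_inv_apply(2))
  then have "mult_aut mult u (inner_aut (\<sigma> \<alpha>) \<circ> \<sigma> \<circ> \<rho>)"
    using assms by (intro mult_aut_comp mult_aut_inner_aut)
  then show ?thesis unfolding coord_sum_rule_def by blast
qed

lemma tau_add_mult_right:
  assumes \<sigma>: "mult_aut mult u \<sigma>" and \<rho>: "mult_aut mult u \<rho>" and "\<alpha> \<noteq> z"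
  shows "tau_add add \<sigma> (mult (\<rho> x) \<alpha>) (mult (\<rho> y) \<alpha>) = mult (\<rho> (coord_sum_rule \<sigma> \<rho> \<alpha> x y)) \<alpha>"
proof -
  define b where "b = \<sigma> \<alpha>"
  define \<kappa> where "\<kappa> = inner_aut b \<circ> \<sigma> \<circ> \<rho>"
  have "b \<noteq> z" unfolding b_def using assms by (metis mult_aut_zero mult_aut_inv_apply(2))
  then have \<kappa>: "mult_aut mult u \<kappa>"
    unfolding \<kappa>_def using \<sigma> \<rho> by (intro mult_aut_comp mult_aut_inner_aut)
  have \<sigma>_scaled: "\<sigma> (mult (\<rho> x) \<alpha>) = mult b (\<kappa> x)" for x
  proof -
    have "\<sigma> (mult (\<rho> x) \<alpha>) = mult (\<sigma> (\<rho> x)) b"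
      using \<sigma> unfolding mult_aut_def b_def by simp
    also have "\<dots> = mult (mult b (inverse_of b)) (mult (\<sigma> (\<rho> x)) b)"
      by (simp add: mult_inverse_of[OF \<open>b \<noteq> z\<close>] mult_one_left)
    also have "\<dots> = mult b (\<kappa> x)"
      unfolding \<kappa>_def inner_aut_def by (simp add: mult_assoc)
    finally show ?thesis .
  qed
  let ?c = "coord_sum_rule \<sigma> \<rho> \<alpha> x y"
  have "add (\<sigma> (mult (\<rho> x) \<alpha>)) (\<sigma> (mult (\<rho> y) \<alpha>)) = mult b (\<kappa> ?c)"
    unfolding \<sigma>_scaled coord_sum_rule_def b_def[symmetric] \<kappa>_def[symmetric]
    by (simp add: mult_aut_tau_add[OF \<kappa>] left_distrib)
  also have "\<dots> = \<sigma> (mult (\<rho> ?c) \<alpha>)" by (simp add: \<sigma>_scaled)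
  finally show ?thesis
    unfolding tau_add_def by (simp add: mult_aut_inv_apply[OF \<sigma>])
qed

end

locale mult_nvs_coords = nearfield +
  fixes V :: "'v set" and vadd :: "'v \<Rightarrow> 'v \<Rightarrow> 'v" and vz :: 'v and smult :: "'a \<Rightarrow> 'v \<Rightarrow> 'v"
    and J :: "'j set" and \<sigma> \<rho> :: "'j \<Rightarrow> 'a \<Rightarrow> 'a" and \<phi> :: "'v \<Rightarrow> 'j \<Rightarrow> 'a"
  assumes nvs: "nvs add mult z u V vadd vz smult"
    and mult_aut_\<sigma>: "i \<in> J \<Longrightarrow> mult_aut mult u (\<sigma> i)"
    and mult_aut_\<rho>: "i \<in> J \<Longrightarrow> mult_aut mult u (\<rho> i)"
    and bij_coords: "bij_betw \<phi> V (fsupp z J)"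
    and coords_vadd: "v \<in> V \<Longrightarrow> w \<in> V \<Longrightarrow>
      \<phi> (vadd v w) = (\<lambda>i. if i \<in> J then tau_add add (\<sigma> i) (\<phi> v i) (\<phi> w i) else z)"
    and coords_smult: "v \<in> V \<Longrightarrow> \<phi> (smult a v) = (\<lambda>i. if i \<in> J then mult (\<rho> i a) (\<phi> v i) else z)"
begin

lemmas vz_in = ab_grp_onD(1)[OF nvsD(1)[OF nvs]]
  and vadd_in = ab_grp_onD(2)[OF nvsD(1)[OF nvs]]
  and smult_in = nvsD(2)[OF nvs]
  and smult_zero = nvsD(5)[OF nvs]

lemma coords_inject: "v \<in> V \<Longrightarrow> w \<in> V \<Longrightarrow> \<phi> v = \<phi> w \<Longrightarrow> v = w"
  using bij_coords unfolding bij_betw_def inj_on_def by blast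

lemma coords_outside: "v \<in> V \<Longrightarrow> i \<notin> J \<Longrightarrow> \<phi> v i = z"
  using bij_betw_apply[OF bij_coords] unfolding fsupp_def by blast

lemma coords_vz: "\<phi> vz = (\<lambda>i. z)"
proof -
  have "\<phi> vz = \<phi> (smult z vz)" by (simp add: smult_zero vz_in)
  also have "\<dots> = (\<lambda>i. z)"
    by (auto simp: fun_eq_iff coords_smult vz_in mult_aut_\<rho> mult_aut_zero mult_zero_left)
  finally show ?thesis .
qed

definition restrict_coords :: "'j set \<Rightarrow> 'v \<Rightarrow> 'v" where
  "restrict_coords A v = inv_into V \<phi> (\<lambda>i. if i \<in> A then \<phi> v i else z)"

lemma
  assumes "v \<in> V"
  shows restrict_coords_in: "restrict_coords A v \<in> V"
    and coords_restrict_coords: "\<phi> (restrict_coords A v) = (\<lambda>i. if i \<in> A then \<phi> v i else z)"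
proof -
  have "\<phi> v \<in> fsupp z J" using assms bij_betw_apply[OF bij_coords] by blast
  then have "(\<lambda>i. if i \<in> A then \<phi> v i else z) \<in> fsupp z J"
    unfolding fsupp_def by (auto elim: rev_finite_subset)
  then show "restrict_coords A v \<in> V" "\<phi> (restrict_coords A v) = (\<lambda>i. if i \<in> A then \<phi> v i else z)"
    unfolding restrict_coords_def
    using bij_betw_inv_into_right[OF bij_coords] bij_betw_apply[OF bij_betw_inv_into[OF bij_coords]]
    by auto
qed

lemma restrict_coords_empty: "v \<in> V \<Longrightarrow> restrict_coords {} v = vz"
  by (rule coords_inject) (simp_all add: restrict_coords_in coords_restrict_coords vz_in coords_vz)

lemma restrict_coords_Un:
  assumes v: "v \<in> V" and "A \<inter> B = {}"
  shows "restrict_coords (A \<union> B) v = vadd (restrict_coords A v) (restrict_coords B v)"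
proof (rule coords_inject)
  show "\<phi> (restrict_coords (A \<union> B) v) = \<phi> (vadd (restrict_coords A v) (restrict_coords B v))"
    using \<open>A \<inter> B = {}\<close> coords_outside[OF v]
    by (auto simp: fun_eq_iff coords_vadd restrict_coords_in[OF v] coords_restrict_coords[OF v] mult_aut_\<sigma>
        tau_add_zero_left tau_add_zero_right)
qed (simp_all add: v vadd_in restrict_coords_in coords_restrict_coords)

lemma restrict_coords_support:
  assumes v: "v \<in> V" and "{i. \<phi> v i \<noteq> z} \<subseteq> A"
  shows "restrict_coords A v = v"
  by (rule coords_inject) (use assms in \<open>auto simp: fun_eq_iff restrict_coords_in coords_restrict_coords\<close>)

lemma qker_rule_if_coords_uniform:
  assumes w: "w \<in> V"
    and uniform: "\<And>i. i \<in> J \<Longrightarrow> \<phi> w i \<noteq> z \<Longrightarrow> coord_sum_rule (\<sigma> i) (\<rho> i) (\<phi> w i) = p"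
  shows "w \<in> qker_rule V vadd smult p"
proof -
  have "vadd (smult a w) (smult b w) = smult (p a b) w" for a b
  proof (rule coords_inject)
    show "\<phi> (vadd (smult a w) (smult b w)) = \<phi> (smult (p a b) w)"
    proof
      fix i
      show "\<phi> (vadd (smult a w) (smult b w)) i = \<phi> (smult (p a b) w) i"
      proof (cases "i \<in> J \<and> \<phi> w i \<noteq> z")
        case True
        then have "p a b = coord_sum_rule (\<sigma> i) (\<rho> i) (\<phi> w i) a b" using uniform by simp
        with True show ?thesis
          by (simp add: w smult_in coords_vadd coords_smult mult_aut_\<sigma> mult_aut_\<rho> tau_add_mult_right)
      next
        case False
        then show ?thesis
          by (auto simp: w smult_in coords_vadd coords_smult mult_aut_\<sigma> mult_zero_right
              tau_add_zero_left)
      qed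
    qed
  qed (simp_all add: w vadd_in smult_in)
  then show ?thesis unfolding qker_rule_def using w by blast
qed

definition class_part :: "('a \<Rightarrow> 'a \<Rightarrow> 'a) set \<Rightarrow> 'v \<Rightarrow> 'v" where
  "class_part T v = restrict_coords {i. coord_sum_rule (\<sigma> i) (\<rho> i) (\<phi> v i) \<in> T} v"

lemma foldr_class_part:
  assumes "v \<in> V" "distinct ps"
  shows "foldr (\<lambda>p. vadd (class_part {p} v)) ps vz = class_part (set ps) v"
  using \<open>distinct ps\<close>
proof (induction ps)
  case Nil
  then show ?case by (simp add: class_part_def restrict_coords_empty \<open>v \<in> V\<close>)
next
  case (Cons p ps)
  let ?classes = "\<lambda>T. {i. coord_sum_rule (\<sigma> i) (\<rho> i) (\<phi> v i) \<in> T}"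
  have "?classes (set (p # ps)) = ?classes {p} \<union> ?classes (set ps)"
    and "?classes {p} \<inter> ?classes (set ps) = {}"
    using Cons.prems by auto
  then have "class_part (set (p # ps)) v = vadd (class_part {p} v) (class_part (set ps) v)"
    unfolding class_part_def by (simp add: restrict_coords_Un \<open>v \<in> V\<close>)
  with Cons show ?case by simp
qed

lemma qker_rule_decomposition:
  assumes v: "v \<in> V" and "distinct rules"
    and rules: "{tau_add add \<tau> | \<tau>. mult_aut mult u \<tau>} \<subseteq> set rules"
  shows "\<exists>w. (\<forall>p\<in>set rules. w p \<in> qker_rule V vadd smult p) \<and> v = foldr (\<lambda>p. vadd (w p)) rules vz"
proof (intro exI conjI ballI)
  show "class_part {p} v \<in> qker_rule V vadd smult p" for p
    by (rule qker_rule_if_coords_uniform)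
      (auto simp: class_part_def restrict_coords_in coords_restrict_coords v split: if_splits)
  have "{i. \<phi> v i \<noteq> z} \<subseteq> {i. coord_sum_rule (\<sigma> i) (\<rho> i) (\<phi> v i) \<in> set rules}"
  proof (intro subsetI CollectI)
    fix i assume "i \<in> {i. \<phi> v i \<noteq> z}"
    moreover from this have "i \<in> J" using coords_outside[OF v] by blast
    ultimately show "coord_sum_rule (\<sigma> i) (\<rho> i) (\<phi> v i) \<in> set rules"
      using rules coord_sum_rule_mult_aut[OF mult_aut_\<sigma> mult_aut_\<rho>] by blast
  qed
  then have "class_part (set rules) v = v"
    unfolding class_part_def by (rule restrict_coords_support[OF v])
  then show "v = foldr (\<lambda>p. vadd (class_part {p} v)) rules vz"
    by (simp add: foldr_class_part v \<open>distinct rules\<close>)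
qed

end

lemma (in nearfield) mult_nvs_qker_rule_decomposition:
  fixes V :: "'v set"
  assumes "mult_nvs add mult z u V vadd vz smult" "v \<in> V" "distinct rules"
    and "{tau_add add \<tau> | \<tau>. mult_aut mult u \<tau>} \<subseteq> set rules"
  shows "\<exists>w. (\<forall>p\<in>set rules. w p \<in> qker_rule V vadd smult p) \<and> v = foldr (\<lambda>p. vadd (w p)) rules vz"
proof -
  from assms(1) obtain J :: "'v set" and \<sigma> \<rho> \<phi> where
    "\<forall>i\<in>J. mult_aut mult u (\<sigma> i) \<and> mult_aut mult u (\<rho> i)" "bij_betw \<phi> V (fsupp z J)"
    "\<forall>v\<in>V. \<forall>w\<in>V. \<phi> (vadd v w) = (\<lambda>i. if i \<in> J then tau_add add (\<sigma> i) (\<phi> v i) (\<phi> w i) else z)"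
    "\<forall>a. \<forall>v\<in>V. \<phi> (smult a v) = (\<lambda>i. if i \<in> J then mult (\<rho> i a) (\<phi> v i) else z)"
    unfolding mult_nvs_def by blast
  then interpret mult_nvs_coords add mult z u V vadd vz smult J \<sigma> \<rho> \<phi>
    using assms(1) by unfold_locales (auto simp: mult_nvs_def)
  show ?thesis by (rule qker_rule_decomposition) (rule assms)+
qed

abbreviation prod_vadd :: "'i set \<Rightarrow> ('i \<Rightarrow> 'v \<Rightarrow> 'v \<Rightarrow> 'v) \<Rightarrow> ('i \<Rightarrow> 'v) \<Rightarrow> ('i \<Rightarrow> 'v) \<Rightarrow> 'i \<Rightarrow> 'v" where
  "prod_vadd I vadd \<equiv> \<lambda>f g. \<lambda>k\<in>I. vadd k (f k) (g k)"

abbreviation prod_smult :: "'i set \<Rightarrow> ('i \<Rightarrow> 'a \<Rightarrow> 'v \<Rightarrow> 'v) \<Rightarrow> 'a \<Rightarrow> ('i \<Rightarrow> 'v) \<Rightarrow> 'i \<Rightarrow> 'v" where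
  "prod_smult I smult \<equiv> \<lambda>a f. \<lambda>k\<in>I. smult k a (f k)"

lemma foldr_prod_vadd:
  "foldr (\<lambda>p. prod_vadd I vadd (g p)) ps (\<lambda>k\<in>I. vz k) = (\<lambda>k\<in>I. foldr (\<lambda>p. vadd k (g p k)) ps (vz k))"
  by (induction ps) auto

lemma ab_grp_on_PiE:
  assumes "\<And>k. k \<in> I \<Longrightarrow> ab_grp_on (V k) (vadd k) (vz k)"
  shows "ab_grp_on (Pi\<^sub>E I V) (prod_vadd I vadd) (\<lambda>k\<in>I. vz k)"
  unfolding ab_grp_on_def
proof (intro conjI ballI)
  note grp = ab_grp_onD[OF assms]
  show "(\<lambda>k\<in>I. vz k) \<in> Pi\<^sub>E I V" by (simp add: grp(1))
  fix f g h assume f: "f \<in> Pi\<^sub>E I V" and g: "g \<in> Pi\<^sub>E I V" and h: "h \<in> Pi\<^sub>E I V"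
  show "prod_vadd I vadd f g \<in> Pi\<^sub>E I V" using f g by (auto intro: grp(2))
  show "prod_vadd I vadd f g = prod_vadd I vadd g f"
    using f g by (intro restrict_ext) (simp add: grp(4) PiE_mem)
  show "prod_vadd I vadd (prod_vadd I vadd f g) h = prod_vadd I vadd f (prod_vadd I vadd g h)"
    using f g h by (intro restrict_ext) (simp add: grp(3) PiE_mem)
next
  note grp = ab_grp_onD[OF assms]
  fix f assume f: "f \<in> Pi\<^sub>E I V"
  have "prod_vadd I vadd (\<lambda>k\<in>I. vz k) f = restrict f I"
    using f by (intro restrict_ext) (simp add: grp(5) PiE_mem)
  then show "prod_vadd I vadd (\<lambda>k\<in>I. vz k) f = f"
    using f by (simp add: PiE_restrict)
  have "\<forall>k\<in>I. \<exists>g\<in>V k. vadd k (f k) g = vz k" using f grp(6) by blast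
  then obtain g where "\<forall>k\<in>I. g k \<in> V k \<and> vadd k (f k) (g k) = vz k"
    by metis
  then show "\<exists>g\<in>Pi\<^sub>E I V. prod_vadd I vadd f g = (\<lambda>k\<in>I. vz k)"
    by (intro bexI[of _ "restrict g I"]) auto
qed

lemma PiE_subset_agen_qker:
  assumes decomposition: "\<And>k v. k \<in> I \<Longrightarrow> v \<in> V k \<Longrightarrow>
      \<exists>w. (\<forall>p\<in>set rules. w p \<in> qker_rule (V k) (vadd k) (smult k) p) \<and>
          v = foldr (\<lambda>p. vadd k (w p)) rules (vz k)"
  shows "Pi\<^sub>E I V \<subseteq> agen (Pi\<^sub>E I V) (prod_vadd I vadd) (\<lambda>k\<in>I. vz k)
           (qker (Pi\<^sub>E I V) (prod_vadd I vadd) (prod_smult I smult))"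
proof
  fix f assume f: "f \<in> Pi\<^sub>E I V"
  have "\<forall>k\<in>I. \<exists>w. (\<forall>p\<in>set rules. w p \<in> qker_rule (V k) (vadd k) (smult k) p) \<and>
          f k = foldr (\<lambda>p. vadd k (w p)) rules (vz k)"
    using decomposition f by (simp add: PiE_mem)
  then obtain W where W: "\<And>k p. k \<in> I \<Longrightarrow> p \<in> set rules \<Longrightarrow> W k p \<in> qker_rule (V k) (vadd k) (smult k) p"
    and f_eq: "\<And>k. k \<in> I \<Longrightarrow> f k = foldr (\<lambda>p. vadd k (W k p)) rules (vz k)"
    by metis
  define g where "g p = (\<lambda>k\<in>I. W k p)" for p
  have "g p \<in> qker_rule (Pi\<^sub>E I V) (prod_vadd I vadd) (prod_smult I smult) p" if "p \<in> set rules" for p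
  proof -
    have "W k p \<in> V k \<and> (\<forall>a b. vadd k (smult k a (W k p)) (smult k b (W k p)) = smult k (p a b) (W k p))"
      if "k \<in> I" for k
      using W[OF \<open>k \<in> I\<close> \<open>p \<in> set rules\<close>] unfolding qker_rule_def by blast
    then show ?thesis
      unfolding qker_rule_def g_def by (simp add: PiE_iff) (intro allI restrict_ext; simp)
  qed
  then have "foldr (\<lambda>p. prod_vadd I vadd (g p)) rules (\<lambda>k\<in>I. vz k)
      \<in> agen (Pi\<^sub>E I V) (prod_vadd I vadd) (\<lambda>k\<in>I. vz k) (qker (Pi\<^sub>E I V) (prod_vadd I vadd) (prod_smult I smult))"
    by (intro foldr_in_agen agen.agen_gen) (meson qker_rule_subset_qker subsetD)
  moreover have "foldr (\<lambda>p. prod_vadd I vadd (g p)) rules (\<lambda>k\<in>I. vz k) = f"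
  proof -
    have "foldr (\<lambda>p. prod_vadd I vadd (g p)) rules (\<lambda>k\<in>I. vz k)
        = (\<lambda>k\<in>I. foldr (\<lambda>p. vadd k (g p k)) rules (vz k))"
      by (rule foldr_prod_vadd)
    also have "\<dots> = restrict f I" by (intro restrict_ext) (simp add: g_def f_eq)
    also have "\<dots> = f" using f by (rule PiE_restrict)
    finally show ?thesis .
  qed
  ultimately show "f \<in> agen (Pi\<^sub>E I V) (prod_vadd I vadd) (\<lambda>k\<in>I. vz k)
      (qker (Pi\<^sub>E I V) (prod_vadd I vadd) (prod_smult I smult))"
    by simp
qed

lemma nvs_PiE:
  assumes nvs: "\<And>k. k \<in> I \<Longrightarrow> nvs add mult z u (V k) (vadd k) (vz k) (smult k)"
    and generated: "Pi\<^sub>E I V \<subseteq> agen (Pi\<^sub>E I V) (prod_vadd I vadd) (\<lambda>k\<in>I. vz k)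
      (qker (Pi\<^sub>E I V) (prod_vadd I vadd) (prod_smult I smult))"
  shows "nvs add mult z u (Pi\<^sub>E I V) (prod_vadd I vadd) (\<lambda>k\<in>I. vz k) (prod_smult I smult)"
proof -
  have grp: "ab_grp_on (Pi\<^sub>E I V) (prod_vadd I vadd) (\<lambda>k\<in>I. vz k)"
    using nvsD(1)[OF nvs] by (rule ab_grp_on_PiE)
  have free: "a = b \<or> f = (\<lambda>k\<in>I. vz k)"
    if f: "f \<in> Pi\<^sub>E I V" and eq: "prod_smult I smult a f = prod_smult I smult b f" for a b f
  proof (cases "\<exists>k\<in>I. f k \<noteq> vz k")
    case True
    then obtain k where k: "k \<in> I" "f k \<noteq> vz k" by blast
    with fun_cong[OF eq, of k] have "smult k a (f k) = smult k b (f k)" by simp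
    with k f show ?thesis using nvsD(8)[OF nvs] by (metis PiE_mem)
  next
    case False
    then have "restrict f I = (\<lambda>k\<in>I. vz k)" by (intro restrict_ext) simp
    then show ?thesis by (simp add: PiE_restrict[OF f])
  qed
  have "agen (Pi\<^sub>E I V) (prod_vadd I vadd) (\<lambda>k\<in>I. vz k)
      (qker (Pi\<^sub>E I V) (prod_vadd I vadd) (prod_smult I smult)) \<subseteq> Pi\<^sub>E I V"
    using ab_grp_onD[OF grp] by (intro agen_subset) (auto simp: qker_def)
  with generated have "Pi\<^sub>E I V = agen (Pi\<^sub>E I V) (prod_vadd I vadd) (\<lambda>k\<in>I. vz k)
      (qker (Pi\<^sub>E I V) (prod_vadd I vadd) (prod_smult I smult))"
    by blast
  with grp free show ?thesis
    unfolding nvs_def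
    by (intro conjI allI ballI impI; simp add: PiE_mem nvsD[OF nvs] cong: restrict_cong)
qed

theorem theorem3p17:
  fixes add mult :: "'a \<Rightarrow> 'a \<Rightarrow> 'a" and z u :: 'a
    and I :: "'i set" and V :: "'i \<Rightarrow> 'v set"
    and vadd :: "'i \<Rightarrow> 'v \<Rightarrow> 'v \<Rightarrow> 'v" and vz :: "'i \<Rightarrow> 'v"
    and smult :: "'i \<Rightarrow> 'a \<Rightarrow> 'v \<Rightarrow> 'v"
  assumes "near_field add mult z u"
    and "finite {tau_add add \<tau> | \<tau>. mult_aut mult u \<tau>}"
    and "fin_dim_over_Fd add mult z"
    and "\<forall>k\<in>I. mult_nvs add mult z u (V k) (vadd k) (vz k) (smult k)"
  shows "nvs add mult z u (Pi\<^sub>E I V)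
           (\<lambda>f g. \<lambda>k\<in>I. vadd k (f k) (g k))
           (\<lambda>k\<in>I. vz k)
           (\<lambda>a f. \<lambda>k\<in>I. smult k a (f k))"
proof -
  interpret nearfield add mult z u using assms(1) by (rule nearfield.intro)
  obtain rules where "set rules = {tau_add add \<tau> | \<tau>. mult_aut mult u \<tau>}" "distinct rules"
    using finite_distinct_list[OF assms(2)] by blast
  then have "Pi\<^sub>E I V \<subseteq> agen (Pi\<^sub>E I V) (prod_vadd I vadd) (\<lambda>k\<in>I. vz k)
      (qker (Pi\<^sub>E I V) (prod_vadd I vadd) (prod_smult I smult))"
    using assms(4) by (intro PiE_subset_agen_qker mult_nvs_qker_rule_decomposition) auto
  moreover have "nvs add mult z u (V k) (vadd k) (vz k) (smult k)" if "k \<in> I" for k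
    using assms(4) that unfolding mult_nvs_def by blast
  ultimately show ?thesis by (intro nvs_PiE)
qed

end
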